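(* Let $D$ be an $m\times m$ differential matrix over a field and let $B_1,B_2$ be $m\times m$ triangular matrices. If both $\underline D_1=B_1^{-1}DB_1$ and $\underline D_2=B_2^{-1}DB_2$ are almost-Jordan, then $\underline D_1=\underline D_2$.
   Context: A differential matrix is a square matrix $D$ with $D^2=0$. A square matrix is triangular if it is upper-triangular and invertible. A differential matrix is Jordan if it is block-diagonal with each diagonal block equal to $[0]$ or $\begin{bmatrix}0&1\\0&0\end{bmatrix}$; it is almost-Jordan if $P^{-1}\underline DP$ is Jordan for some permutation matrix $P$. *)

theory Defs
  imports "Jordan_Normal_Form.Matrix" "HOL-Combinatorics.Permutations"
begin

definition mat_inv :: "'a::field mat \<Rightarrow> 'a mat" where
  "mat_inv A = (THE B. inverts_mat A B \<and> inverts_mat B A)"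

definition differential_mat :: "'a::field mat \<Rightarrow> bool" where
  "differential_mat D \<longleftrightarrow> square_mat D \<and> D * D = 0\<^sub>m (dim_row D) (dim_col D)"

definition triangular_mat :: "'a::field mat \<Rightarrow> bool" where
  "triangular_mat B \<longleftrightarrow> upper_triangular B \<and> invertible_mat B"

definition jblock2 :: "'a::field mat" where
  "jblock2 = mat 2 2 (\<lambda>(i,j). if i = 0 \<and> j = 1 then 1 else 0)"

definition jordan_diff :: "'a::field mat \<Rightarrow> bool" where
  "jordan_diff J \<longleftrightarrow> (\<exists>bs. set bs \<subseteq> {0\<^sub>m 1 1, jblock2} \<and> J = diag_block_mat bs)"

definition perm_mat :: "nat \<Rightarrow> (nat \<Rightarrow> nat) \<Rightarrow> 'a::field mat" where
  "perm_mat m \<sigma> = mat m m (\<lambda>(i,j). if i = \<sigma> j then 1 else 0)"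

definition almost_jordan :: "'a::field mat \<Rightarrow> bool" where
  "almost_jordan D \<longleftrightarrow> (\<exists>\<sigma>. \<sigma> permutes {..<dim_row D} \<and>
      (let P = perm_mat (dim_row D) \<sigma> in jordan_diff (mat_inv P * D * P)))"

end

theory Submission
  imports Defs "Jordan_Normal_Form.Determinant"
begin

text \<open>
  Put C = B1^-1 B2, an upper triangular matrix with nonzero diagonal; the two conjugates
  E1 = B1^-1 D B1 and E2 = B2^-1 D B2 then satisfy E1 C = C E2. Almost-Jordan matrices are
  partial permutation matrices: 0/1 matrices with at most one nonzero entry in every row and
  every column. Reading off nonzero entries of E1 C = C E2, every nonzero position (i,a) of E1
  is matched with a nonzero position (c,a) of E2 in the same column with c >= i, and every
  nonzero position of E2 with one of E1 in the same row. Both matchings are injective, hence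
  bijective, and the first one, which never lowers a row index, preserves the sum of the row
  indices only if it is the identity. So the supports agree, and 0/1 matrices with equal
  supports are equal.
\<close>

lemma sum_eq_single:
  assumes "finite S" "a \<in> S" "\<And>k. k \<in> S \<Longrightarrow> k \<noteq> a \<Longrightarrow> f k = 0"
  shows "sum f S = f a"
  using assms by (simp add: sum.remove sum.neutral)

lemma index_mult_mat_sum:
  assumes "A \<in> carrier_mat n k" "B \<in> carrier_mat k p" "i < n" "j < p"
  shows "(A * B) $$ (i,j) = (\<Sum>l\<in>{0..<k}. A $$ (i,l) * B $$ (l,j))"
  using assms by (auto simp: index_mult_mat scalar_prod_def intro!: sum.cong)

lemma inj_on_fst_map_prod: "inj f \<Longrightarrow> inj_on fst S \<Longrightarrow> inj_on fst (map_prod f g ` S)"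
proof (rule inj_on_imageI)
  assume "inj f" "inj_on fst S"
  moreover have "fst \<circ> map_prod f g = f \<circ> fst" by auto
  ultimately show "inj_on (fst \<circ> map_prod f g) S"
    by (metis comp_inj_on inj_on_subset subset_UNIV)
qed

lemma inj_on_snd_map_prod: "inj g \<Longrightarrow> inj_on snd S \<Longrightarrow> inj_on snd (map_prod f g ` S)"
proof (rule inj_on_imageI)
  assume "inj g" "inj_on snd S"
  moreover have "snd \<circ> map_prod f g = g \<circ> snd" by auto
  ultimately show "inj_on (snd \<circ> map_prod f g) S"
    by (metis comp_inj_on inj_on_subset subset_UNIV)
qed

section \<open>Inverses and permutation matrices\<close>

lemma mat_inv_eqI:
  fixes A B :: "'a::field mat"
  assumes A: "A \<in> carrier_mat n n" and B: "B \<in> carrier_mat n n" and AB: "A * B = 1\<^sub>m n"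
  shows "mat_inv A = B"
  unfolding mat_inv_def
proof (rule the_equality)
  have "B * A = 1\<^sub>m n" by (rule mat_mult_left_right_inverse[OF A B AB])
  then show "inverts_mat A B \<and> inverts_mat B A"
    using A B AB by (simp add: inverts_mat_def)
next
  fix X assume "inverts_mat A X \<and> inverts_mat X A"
  then have AX: "A * X = 1\<^sub>m n" and XA: "X * A = 1\<^sub>m (dim_row X)"
    using A by (auto simp: inverts_mat_def)
  have "dim_col X = n" using arg_cong[OF AX, of dim_col] by simp
  moreover have "dim_row X = n" using arg_cong[OF XA, of dim_col] A by simp
  ultimately have X: "X \<in> carrier_mat n n" by auto
  have "X = X * (A * B)" using X AB by simp
  also have "\<dots> = (X * A) * B" using A B X by (simp add: assoc_mult_mat)
  also have "\<dots> = B" using XA X B by simp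
  finally show "X = B" .
qed

lemma invertible_mat_inv:
  fixes A :: "'a::field mat"
  assumes A: "A \<in> carrier_mat n n" and inv: "invertible_mat A"
  shows "mat_inv A \<in> carrier_mat n n" "A * mat_inv A = 1\<^sub>m n" "mat_inv A * A = 1\<^sub>m n"
proof -
  obtain B where AB: "A * B = 1\<^sub>m n" and BA: "B * A = 1\<^sub>m (dim_row B)"
    using inv A unfolding invertible_mat_def inverts_mat_def by auto
  have "dim_col B = n" using arg_cong[OF AB, of dim_col] by simp
  moreover have "dim_row B = n" using arg_cong[OF BA, of dim_col] A by simp
  ultimately have B: "B \<in> carrier_mat n n" by auto
  then show "mat_inv A \<in> carrier_mat n n" "A * mat_inv A = 1\<^sub>m n" "mat_inv A * A = 1\<^sub>m n"
    using mat_inv_eqI[OF A B AB] AB BA by auto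
qed

lemma det_invertible_mat_nonzero:
  fixes A :: "'a::field mat"
  assumes A: "A \<in> carrier_mat n n" and inv: "invertible_mat A"
  shows "det A \<noteq> 0" "det (mat_inv A) \<noteq> 0"
  using det_mult[OF A invertible_mat_inv(1)[OF A inv]] invertible_mat_inv(2)[OF A inv] by auto

lemma perm_mat_carrier [simp]: "perm_mat n \<sigma> \<in> carrier_mat n n"
  by (simp add: perm_mat_def)

lemma dim_row_perm_mat [simp]: "dim_row (perm_mat n \<sigma>) = n"
  by (simp add: perm_mat_def)

lemma dim_col_perm_mat [simp]: "dim_col (perm_mat n \<sigma>) = n"
  by (simp add: perm_mat_def)

lemma permutes_lessThan_less: "\<sigma> permutes {..<n} \<Longrightarrow> i < n \<Longrightarrow> \<sigma> i < n"
  using permutes_in_image by fastforce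

lemma permutes_lessThan_obtain:
  assumes "\<sigma> permutes {..<n}" "a < n"
  obtains i where "i < n" "\<sigma> i = a"
  using assms permutes_image[OF assms(1)] by (metis imageE lessThan_iff)

lemma index_mult_perm_mat:
  fixes A :: "'a::field mat"
  assumes \<sigma>: "\<sigma> permutes {..<n}" and A: "A \<in> carrier_mat k n" and "i < k" "j < n"
  shows "(A * perm_mat n \<sigma>) $$ (i,j) = A $$ (i, \<sigma> j)"
proof -
  have "(A * perm_mat n \<sigma>) $$ (i,j) = (\<Sum>l\<in>{0..<n}. A $$ (i,l) * perm_mat n \<sigma> $$ (l,j))"
    using assms by (intro index_mult_mat_sum) auto
  also have "\<dots> = A $$ (i, \<sigma> j)"
    using assms permutes_lessThan_less[OF \<sigma>] by (simp add: perm_mat_def if_distrib cong: if_cong)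
  finally show ?thesis .
qed

lemma index_transpose_perm_mat_mult:
  fixes A :: "'a::field mat"
  assumes \<sigma>: "\<sigma> permutes {..<n}" and A: "A \<in> carrier_mat n k" and "i < n" "j < k"
  shows "(transpose_mat (perm_mat n \<sigma>) * A) $$ (i,j) = A $$ (\<sigma> i, j)"
proof -
  have "(transpose_mat (perm_mat n \<sigma>) * A) $$ (i,j)
      = (\<Sum>l\<in>{0..<n}. transpose_mat (perm_mat n \<sigma>) $$ (i,l) * A $$ (l,j))"
    using assms by (intro index_mult_mat_sum) auto
  also have "\<dots> = A $$ (\<sigma> i, j)"
    using assms permutes_lessThan_less[OF \<sigma>]
    by (simp add: perm_mat_def if_distrib[of "\<lambda>x. x * y" for y] cong: if_cong)
  finally show ?thesis .
qed

lemma mat_inv_perm_mat: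
  assumes \<sigma>: "\<sigma> permutes {..<n}"
  shows "mat_inv (perm_mat n \<sigma> :: 'a::field mat) = transpose_mat (perm_mat n \<sigma>)"
proof -
  let ?P = "perm_mat n \<sigma> :: 'a mat"
  have Pt: "transpose_mat ?P \<in> carrier_mat n n" by simp
  have PtP: "transpose_mat ?P * ?P = 1\<^sub>m n"
  proof (rule eq_matI)
    fix i j assume "i < dim_row (1\<^sub>m n :: 'a mat)" "j < dim_col (1\<^sub>m n :: 'a mat)"
    then have "(transpose_mat ?P * ?P) $$ (i,j) = transpose_mat ?P $$ (i, \<sigma> j)"
      by (intro index_mult_perm_mat[OF \<sigma> Pt]) auto
    also have "\<dots> = 1\<^sub>m n $$ (i,j)"
      using \<open>i < _\<close> \<open>j < _\<close> permutes_inj[OF \<sigma>]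
      by (simp add: perm_mat_def permutes_lessThan_less[OF \<sigma>] inj_eq)
    finally show "(transpose_mat ?P * ?P) $$ (i,j) = 1\<^sub>m n $$ (i,j)" .
  qed auto
  show ?thesis
    by (rule mat_inv_eqI[OF perm_mat_carrier Pt mat_mult_left_right_inverse[OF Pt perm_mat_carrier PtP]])
qed

lemma index_perm_mat_conj:
  fixes E :: "'a::field mat"
  assumes \<sigma>: "\<sigma> permutes {..<n}" and E: "E \<in> carrier_mat n n" and "i < n" "j < n"
  shows "(mat_inv (perm_mat n \<sigma>) * E * perm_mat n \<sigma>) $$ (i,j) = E $$ (\<sigma> i, \<sigma> j)"
proof -
  have PE: "transpose_mat (perm_mat n \<sigma>) * E \<in> carrier_mat n n"
    by (rule mult_carrier_mat[OF _ E]) simp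
  have "(mat_inv (perm_mat n \<sigma>) * E * perm_mat n \<sigma>) $$ (i,j)
      = (transpose_mat (perm_mat n \<sigma>) * E) $$ (i, \<sigma> j)"
    unfolding mat_inv_perm_mat[OF \<sigma>] using assms by (intro index_mult_perm_mat[OF \<sigma> PE])
  also have "\<dots> = E $$ (\<sigma> i, \<sigma> j)"
    using assms by (intro index_transpose_perm_mat_mult[OF \<sigma> E] permutes_lessThan_less[OF \<sigma>])
  finally show ?thesis .
qed

section \<open>Upper triangular matrices\<close>

lemma upper_triangular_diag_nonzero:
  fixes A :: "'a::field mat"
  assumes A: "A \<in> carrier_mat n n" and ut: "upper_triangular A" and "det A \<noteq> 0" and "i < n"
  shows "A $$ (i,i) \<noteq> 0"
proof -
  have "prod_list (diag_mat A) \<noteq> 0" using assms det_upper_triangular[OF ut A] by simp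
  moreover have "A $$ (i,i) \<in> set (diag_mat A)" using assms by (auto simp: diag_mat_def)
  ultimately show ?thesis by (metis prod_list_zero_iff)
qed

lemma upper_triangular_mult:
  fixes A B :: "'a::semiring_0 mat"
  assumes A: "A \<in> carrier_mat n n" and B: "B \<in> carrier_mat n n"
    and "upper_triangular A" "upper_triangular B"
  shows "upper_triangular (A * B)"
proof (rule upper_triangularI)
  fix i j assume "j < i" "i < dim_row (A * B)"
  then have "A $$ (i,l) * B $$ (l,j) = 0" if "l < n" for l
    using assms that by (cases "l < i") (auto simp: upper_triangularD)
  moreover have "i < n" using \<open>i < _\<close> A by simp
  ultimately show "(A * B) $$ (i,j) = 0"
    using \<open>j < i\<close> by (simp add: index_mult_mat_sum[OF A B] del: index_mult_mat)
qed

lemma upper_triangular_mat_inv: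
  fixes A :: "'a::field mat"
  assumes A: "A \<in> carrier_mat n n" and ut: "upper_triangular A" and inv: "invertible_mat A"
  shows "upper_triangular (mat_inv A)"
proof (rule upper_triangularI)
  let ?X = "mat_inv A"
  have X: "?X \<in> carrier_mat n n" and XA: "?X * A = 1\<^sub>m n"
    using invertible_mat_inv[OF A inv] by auto
  have diag: "A $$ (j,j) \<noteq> 0" if "j < n" for j
    using upper_triangular_diag_nonzero[OF A ut det_invertible_mat_nonzero(1)[OF A inv] that] .
  fix i j assume "j < i" "i < dim_row ?X"
  then have "i < n" using X by simp
  from \<open>j < i\<close> show "?X $$ (i,j) = 0"
  proof (induction j rule: less_induct)
    case (less j)
    have "j < n" using less \<open>i < n\<close> by simp
    have "?X $$ (i,l) * A $$ (l,j) = 0" if "l < n" "l \<noteq> j" for l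
      using less that A ut by (cases "l < j") (auto simp: upper_triangularD)
    then have "(?X * A) $$ (i,j) = ?X $$ (i,j) * A $$ (j,j)"
      unfolding index_mult_mat_sum[OF X A \<open>i < n\<close> \<open>j < n\<close>] using \<open>j < n\<close>
      by (intro sum_eq_single) auto
    moreover have "(?X * A) $$ (i,j) = 0" using XA less \<open>i < n\<close> by simp
    ultimately show ?case using diag[of j] less \<open>i < n\<close> by simp
  qed
qed

section \<open>Partial permutation matrices\<close>

definition mat_support :: "'a::zero mat \<Rightarrow> (nat \<times> nat) set" where
  "mat_support A = {(i,j). i < dim_row A \<and> j < dim_col A \<and> A $$ (i,j) \<noteq> 0}"

definition partial_perm_mat :: "'a::{zero,one} mat \<Rightarrow> bool" where
  "partial_perm_mat A \<longleftrightarrow>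
     (\<forall>i<dim_row A. \<forall>j<dim_col A. A $$ (i,j) \<in> {0,1}) \<and>
     inj_on fst (mat_support A) \<and> inj_on snd (mat_support A)"

lemma finite_mat_support [simp]: "finite (mat_support A)"
proof (rule finite_subset)
  show "mat_support A \<subseteq> {..<dim_row A} \<times> {..<dim_col A}"
    by (auto simp: mat_support_def)
qed simp

lemma mat_support_zero_mat [simp]: "mat_support (0\<^sub>m n m) = {}"
  by (auto simp: mat_support_def)

lemma partial_perm_mat_zero_mat [simp]: "partial_perm_mat (0\<^sub>m n m)"
  by (simp add: partial_perm_mat_def)

lemma partial_perm_mat_row_zero:
  assumes "partial_perm_mat A" "(i,a) \<in> mat_support A" "l < dim_col A" "l \<noteq> a"
  shows "A $$ (i,l) = 0"
  using assms inj_onD[of fst "mat_support A" "(i,a)" "(i,l)"]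
  by (auto simp: partial_perm_mat_def mat_support_def)

lemma partial_perm_mat_col_zero:
  assumes "partial_perm_mat A" "(a,j) \<in> mat_support A" "l < dim_row A" "l \<noteq> a"
  shows "A $$ (l,j) = 0"
  using assms inj_onD[of snd "mat_support A" "(a,j)" "(l,j)"]
  by (auto simp: partial_perm_mat_def mat_support_def)

lemma partial_perm_mat_eqI:
  fixes A B :: "'a::zero_neq_one mat"
  assumes "A \<in> carrier_mat n m" "B \<in> carrier_mat n m"
    and "partial_perm_mat A" "partial_perm_mat B" and "mat_support A = mat_support B"
  shows "A = B"
proof (rule eq_matI)
  fix i j assume "i < dim_row B" "j < dim_col B"
  then have "A $$ (i,j) \<in> {0,1}" "B $$ (i,j) \<in> {0,1}" "A $$ (i,j) \<noteq> 0 \<longleftrightarrow> B $$ (i,j) \<noteq> 0"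
    using assms by (auto simp: partial_perm_mat_def mat_support_def set_eq_iff)
  then show "A $$ (i,j) = B $$ (i,j)" by auto
qed (use assms in auto)

lemma mat_support_four_block_mat:
  fixes A D :: "'a::zero mat"
  shows "mat_support (four_block_mat A (0\<^sub>m (dim_row A) (dim_col D)) (0\<^sub>m (dim_row D) (dim_col A)) D)
    = mat_support A \<union> map_prod ((+) (dim_row A)) ((+) (dim_col A)) ` mat_support D"
    (is "mat_support ?M = ?S")
proof (rule equalityI; rule subsetI)
  fix x assume "x \<in> mat_support ?M"
  then obtain i j where x: "x = (i,j)" "i < dim_row A + dim_row D" "j < dim_col A + dim_col D"
    and nz: "?M $$ (i,j) \<noteq> 0"
    by (auto simp: mat_support_def)
  show "x \<in> ?S"
  proof (cases "i < dim_row A")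
    case True
    then show ?thesis using x nz by (auto simp: mat_support_def index_mat_four_block split: if_splits)
  next
    case False
    then have "(i - dim_row A, j - dim_col A) \<in> mat_support D" "dim_col A \<le> j"
      using x nz by (auto simp: mat_support_def index_mat_four_block split: if_splits)
    then show ?thesis using x False by (auto intro!: image_eqI[of _ _ "(i - dim_row A, j - dim_col A)"])
  qed
qed (auto simp: mat_support_def index_mat_four_block)

lemma partial_perm_mat_four_block_mat:
  fixes A D :: "'a::{zero,one} mat"
  assumes A: "partial_perm_mat A" and D: "partial_perm_mat D"
  shows "partial_perm_mat
    (four_block_mat A (0\<^sub>m (dim_row A) (dim_col D)) (0\<^sub>m (dim_row D) (dim_col A)) D)"
proof -
  let ?S = "mat_support A" and ?T = "map_prod ((+) (dim_row A)) ((+) (dim_col A)) ` mat_support D"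
  have "fst ` ?S \<subseteq> {..<dim_row A}" "fst ` ?T \<subseteq> {dim_row A..}"
    and "snd ` ?S \<subseteq> {..<dim_col A}" "snd ` ?T \<subseteq> {dim_col A..}"
    by (auto simp: mat_support_def)
  then have disjoint: "fst ` (?S - ?T) \<inter> fst ` (?T - ?S) = {}" "snd ` (?S - ?T) \<inter> snd ` (?T - ?S) = {}"
    by fastforce+
  have "inj_on fst ?S" "inj_on snd ?S" "inj_on fst ?T" "inj_on snd ?T"
    using A D by (auto simp: partial_perm_mat_def intro: inj_on_fst_map_prod inj_on_snd_map_prod)
  with disjoint have "inj_on fst (?S \<union> ?T)" "inj_on snd (?S \<union> ?T)"
    by (simp_all add: inj_on_Un)
  moreover have "four_block_mat A (0\<^sub>m (dim_row A) (dim_col D)) (0\<^sub>m (dim_row D) (dim_col A)) D $$ (i,j)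
      \<in> {0,1}" if "i < dim_row A + dim_row D" "j < dim_col A + dim_col D" for i j
    using that A D by (auto simp: partial_perm_mat_def index_mat_four_block)
  ultimately show ?thesis
    by (simp add: partial_perm_mat_def mat_support_four_block_mat)
qed

lemma partial_perm_mat_diag_block_mat:
  "(\<And>A. A \<in> set As \<Longrightarrow> partial_perm_mat A) \<Longrightarrow> partial_perm_mat (diag_block_mat As)"
proof (induction As)
  case Nil
  then show ?case by simp
next
  case (Cons A As)
  then show ?case by (simp add: Let_def partial_perm_mat_four_block_mat)
qed

lemma partial_perm_mat_jordan_diff:
  fixes J :: "'a::field mat"
  assumes "jordan_diff J"
  shows "partial_perm_mat J"
proof -
  have "partial_perm_mat (jblock2 :: 'a mat)"
    by (auto simp: partial_perm_mat_def mat_support_def jblock2_def inj_on_def less_2_cases_iff)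
  then show ?thesis
    using assms by (auto simp: jordan_diff_def intro!: partial_perm_mat_diag_block_mat)
qed

lemma mat_support_permute:
  fixes E J :: "'a::zero mat"
  assumes \<sigma>: "\<sigma> permutes {..<n}" and "E \<in> carrier_mat n n" "J \<in> carrier_mat n n"
    and J: "\<And>i j. i < n \<Longrightarrow> j < n \<Longrightarrow> J $$ (i,j) = E $$ (\<sigma> i, \<sigma> j)"
  shows "mat_support E = map_prod \<sigma> \<sigma> ` mat_support J"
proof (rule equalityI; rule subsetI)
  fix x assume "x \<in> mat_support E"
  then obtain a b where x: "x = (a,b)" and "a < n" "b < n" and "E $$ (a,b) \<noteq> 0"
    using assms by (auto simp: mat_support_def)
  obtain i where i: "i < n" "\<sigma> i = a" by (rule permutes_lessThan_obtain[OF \<sigma> \<open>a < n\<close>])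
  obtain j where j: "j < n" "\<sigma> j = b" by (rule permutes_lessThan_obtain[OF \<sigma> \<open>b < n\<close>])
  have "(i,j) \<in> mat_support J"
    using i j J[of i j] \<open>E $$ (a,b) \<noteq> 0\<close> assms(3) by (simp add: mat_support_def)
  then show "x \<in> map_prod \<sigma> \<sigma> ` mat_support J"
    using x i j by force
next
  fix x assume "x \<in> map_prod \<sigma> \<sigma> ` mat_support J"
  then obtain i j where "x = (\<sigma> i, \<sigma> j)" "i < n" "j < n" "J $$ (i,j) \<noteq> 0"
    using assms by (auto simp: mat_support_def)
  then show "x \<in> mat_support E"
    using assms permutes_lessThan_less[OF \<sigma>] by (simp add: mat_support_def)
qed

lemma partial_perm_mat_permute:
  fixes E J :: "'a::{zero,one} mat"
  assumes \<sigma>: "\<sigma> permutes {..<n}" and E: "E \<in> carrier_mat n n" and Jn: "J \<in> carrier_mat n n"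
    and J: "\<And>i j. i < n \<Longrightarrow> j < n \<Longrightarrow> J $$ (i,j) = E $$ (\<sigma> i, \<sigma> j)"
    and pJ: "partial_perm_mat J"
  shows "partial_perm_mat E"
proof -
  have "E $$ (a,b) \<in> {0,1}" if "a < n" "b < n" for a b
  proof -
    obtain i where "i < n" "\<sigma> i = a" by (rule permutes_lessThan_obtain[OF \<sigma> \<open>a < n\<close>])
    obtain j where "j < n" "\<sigma> j = b" by (rule permutes_lessThan_obtain[OF \<sigma> \<open>b < n\<close>])
    then show ?thesis using pJ Jn J[of i j, symmetric] \<open>i < n\<close> \<open>\<sigma> i = a\<close>
      by (auto simp: partial_perm_mat_def)
  qed
  moreover have "mat_support E = map_prod \<sigma> \<sigma> ` mat_support J"
    by (rule mat_support_permute[OF \<sigma> E Jn J])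
  then have "inj_on fst (mat_support E)" "inj_on snd (mat_support E)"
    using pJ permutes_inj[OF \<sigma>]
    by (auto simp: partial_perm_mat_def intro: inj_on_fst_map_prod inj_on_snd_map_prod)
  ultimately show ?thesis
    using E by (simp add: partial_perm_mat_def)
qed

lemma almost_jordan_partial_perm_mat:
  fixes E :: "'a::field mat"
  assumes E: "E \<in> carrier_mat n n" and "almost_jordan E"
  shows "partial_perm_mat E"
proof -
  obtain \<sigma> where \<sigma>: "\<sigma> permutes {..<n}"
    and J: "jordan_diff (mat_inv (perm_mat n \<sigma>) * E * perm_mat n \<sigma>)"
    using assms by (auto simp: almost_jordan_def Let_def)
  have "mat_inv (perm_mat n \<sigma>) \<in> carrier_mat n n"
    unfolding mat_inv_perm_mat[OF \<sigma>] by simp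
  then have "mat_inv (perm_mat n \<sigma>) * E * perm_mat n \<sigma> \<in> carrier_mat n n"
    using E by (intro mult_carrier_mat[OF mult_carrier_mat]) auto
  moreover have "partial_perm_mat (mat_inv (perm_mat n \<sigma>) * E * perm_mat n \<sigma>)"
    using J by (rule partial_perm_mat_jordan_diff)
  ultimately show ?thesis
    using partial_perm_mat_permute[OF \<sigma> E] index_perm_mat_conj[OF \<sigma> E] by blast
qed

section \<open>Conjugation by upper triangular matrices\<close>

lemma pair_sets_eq_by_matchings:
  fixes S T :: "('a::ordered_cancel_comm_monoid_add \<times> 'b) set"
  assumes "finite S" "finite T" and inj_S: "inj_on snd S" and inj_T: "inj_on fst T"
    and ST: "\<And>x. x \<in> S \<Longrightarrow> \<exists>y\<in>T. snd y = snd x \<and> fst x \<le> fst y"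
    and TS: "\<And>y. y \<in> T \<Longrightarrow> \<exists>x\<in>S. fst x = fst y"
  shows "S = T"
proof -
  obtain g where g: "\<And>x. x \<in> S \<Longrightarrow> g x \<in> T \<and> snd (g x) = snd x \<and> fst x \<le> fst (g x)"
    using ST by metis
  obtain h where h: "\<And>y. y \<in> T \<Longrightarrow> h y \<in> S \<and> fst (h y) = fst y"
    using TS by metis
  have inj_g: "inj_on g S"
    using g inj_S by (metis inj_on_def)
  have inj_h: "inj_on h T"
    using h inj_T by (metis inj_on_def)
  have "g ` S \<subseteq> T" "h ` T \<subseteq> S" using g h by auto
  then have "card S = card T"
    using card_inj_on_le[OF inj_g _ \<open>finite T\<close>] card_inj_on_le[OF inj_h _ \<open>finite S\<close>] by simp
  then have gS: "g ` S = T" and hT: "h ` T = S"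
    using \<open>g ` S \<subseteq> T\<close> \<open>h ` T \<subseteq> S\<close> assms(1,2)
    by (simp_all add: card_subset_eq card_image inj_g inj_h)
  have "sum fst S = sum (fst \<circ> h) T" using sum.reindex[OF inj_h, of fst] hT by simp
  also have "\<dots> = sum fst T" using h by (intro sum.cong) auto
  also have "\<dots> = sum (fst \<circ> g) S" using sum.reindex[OF inj_g, of fst] gS by simp
  finally have sums: "sum fst S = sum (fst \<circ> g) S" .
  have "g x = x" if "x \<in> S" for x
  proof -
    have "fst (g x) = fst x"
    proof (rule ccontr)
      assume "fst (g x) \<noteq> fst x"
      then have "fst x < fst (g x)" using g[OF that] by auto
      then have "sum fst S < sum (fst \<circ> g) S"
        using g that by (intro sum_strict_mono_ex1[OF \<open>finite S\<close>]) auto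
      then show False using sums by simp
    qed
    then show ?thesis using g[OF that] by (simp add: prod_eq_iff)
  qed
  then show ?thesis using gS by (metis image_cong image_ident)
qed

lemma partial_perm_mat_eq_if_intertwined:
  fixes E1 E2 C :: "'a::semiring_1_no_zero_divisors mat"
  assumes E1: "E1 \<in> carrier_mat n n" and E2: "E2 \<in> carrier_mat n n" and C: "C \<in> carrier_mat n n"
    and pp1: "partial_perm_mat E1" and pp2: "partial_perm_mat E2"
    and ut: "upper_triangular C" and diag: "\<And>i. i < n \<Longrightarrow> C $$ (i,i) \<noteq> 0"
    and comm: "E1 * C = C * E2"
  shows "E1 = E2"
proof -
  define M where "M = E1 * C"
  have M1: "M $$ (i,j) = (\<Sum>l\<in>{0..<n}. E1 $$ (i,l) * C $$ (l,j))" if "i < n" "j < n" for i j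
    unfolding M_def using index_mult_mat_sum[OF E1 C that] .
  have M2: "M $$ (i,j) = (\<Sum>l\<in>{0..<n}. C $$ (i,l) * E2 $$ (l,j))" if "i < n" "j < n" for i j
    unfolding M_def comm using index_mult_mat_sum[OF C E2 that] .
  have M_nz1: "M $$ (i,a) \<noteq> 0" if "(i,a) \<in> mat_support E1" for i a
  proof -
    have "i < n" "a < n" "E1 $$ (i,a) \<noteq> 0" using that E1 by (auto simp: mat_support_def)
    moreover have "M $$ (i,a) = E1 $$ (i,a) * C $$ (a,a)"
      unfolding M1[OF \<open>i < n\<close> \<open>a < n\<close>] using that E1 \<open>a < n\<close>
      by (intro sum_eq_single) (auto simp: partial_perm_mat_row_zero[OF pp1])
    ultimately show ?thesis using diag by simp
  qed
  have M_nz2: "M $$ (c,j) \<noteq> 0" if "(c,j) \<in> mat_support E2" for c j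
  proof -
    have "c < n" "j < n" "E2 $$ (c,j) \<noteq> 0" using that E2 by (auto simp: mat_support_def)
    moreover have "M $$ (c,j) = C $$ (c,c) * E2 $$ (c,j)"
      unfolding M2[OF \<open>c < n\<close> \<open>j < n\<close>] using that E2 \<open>c < n\<close>
      by (intro sum_eq_single) (auto simp: partial_perm_mat_col_zero[OF pp2])
    ultimately show ?thesis using diag by simp
  qed
  have below: "\<exists>c\<ge>i. (c,j) \<in> mat_support E2" if ij: "i < n" "j < n" and nz: "M $$ (i,j) \<noteq> 0" for i j
  proof -
    obtain l where "l \<in> {0..<n}" "C $$ (i,l) * E2 $$ (l,j) \<noteq> 0"
      using nz unfolding M2[OF ij] by (rule sum.not_neutral_contains_not_neutral)
    moreover have "\<not> l < i" using calculation ut C ij by (auto simp: upper_triangularD)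
    ultimately show ?thesis using E2 ij by (auto simp: mat_support_def not_less)
  qed
  have in_row: "\<exists>a. (i,a) \<in> mat_support E1" if ij: "i < n" "j < n" and nz: "M $$ (i,j) \<noteq> 0" for i j
  proof -
    obtain l where "l \<in> {0..<n}" "E1 $$ (i,l) * C $$ (l,j) \<noteq> 0"
      using nz unfolding M1[OF ij] by (rule sum.not_neutral_contains_not_neutral)
    then show ?thesis using E1 ij by (auto simp: mat_support_def)
  qed
  have "mat_support E1 = mat_support E2"
  proof (rule pair_sets_eq_by_matchings)
    show "inj_on snd (mat_support E1)" "inj_on fst (mat_support E2)"
      using pp1 pp2 by (simp_all add: partial_perm_mat_def)
  next
    fix x assume "x \<in> mat_support E1"
    then show "\<exists>y\<in>mat_support E2. snd y = snd x \<and> fst x \<le> fst y"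
      using below M_nz1 E1 by (fastforce simp: mat_support_def)
  next
    fix y assume "y \<in> mat_support E2"
    then show "\<exists>x\<in>mat_support E1. fst x = fst y"
      using in_row M_nz2 E2 by (fastforce simp: mat_support_def)
  qed simp_all
  then show ?thesis by (rule partial_perm_mat_eqI[OF E1 E2 pp1 pp2])
qed

lemma mat_inv_mult_intertwines_conj:
  fixes D B1 B2 :: "'a::field mat"
  assumes D: "D \<in> carrier_mat n n" and B1: "B1 \<in> carrier_mat n n" and B2: "B2 \<in> carrier_mat n n"
    and "invertible_mat B1" "invertible_mat B2"
  shows "(mat_inv B1 * D * B1) * (mat_inv B1 * B2) = (mat_inv B1 * B2) * (mat_inv B2 * D * B2)"
proof -
  have X1: "mat_inv B1 \<in> carrier_mat n n" "B1 * mat_inv B1 = 1\<^sub>m n"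
    and X2: "mat_inv B2 \<in> carrier_mat n n" "B2 * mat_inv B2 = 1\<^sub>m n"
    using invertible_mat_inv assms by blast+
  have "B1 * (mat_inv B1 * B2) = B2"
    using assoc_mult_mat[OF B1 X1(1) B2, symmetric] X1(2) B2 by simp
  moreover have "B2 * (mat_inv B2 * (D * B2)) = D * B2"
    using assoc_mult_mat[OF B2 X2(1), of "D * B2" n, symmetric] X2(2) D B2 by simp
  ultimately show ?thesis
    using D B1 B2 X1 X2 by (simp add: assoc_mult_mat[of _ n n _ n _ n])
qed

lemma triangular_mat_inv_mult:
  fixes B1 B2 :: "'a::field mat"
  assumes B1: "B1 \<in> carrier_mat n n" and B2: "B2 \<in> carrier_mat n n"
    and "triangular_mat B1" "triangular_mat B2"
  shows "upper_triangular (mat_inv B1 * B2)"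
    and "\<And>i. i < n \<Longrightarrow> (mat_inv B1 * B2) $$ (i,i) \<noteq> 0"
proof -
  have ut1: "upper_triangular B1" "invertible_mat B1"
    and ut2: "upper_triangular B2" "invertible_mat B2"
    using assms(3,4) by (auto simp: triangular_mat_def)
  have X1: "mat_inv B1 \<in> carrier_mat n n" using invertible_mat_inv(1)[OF B1 ut1(2)] .
  then have C: "mat_inv B1 * B2 \<in> carrier_mat n n" using B2 by simp
  show ut_C: "upper_triangular (mat_inv B1 * B2)"
    by (rule upper_triangular_mult[OF X1 B2 upper_triangular_mat_inv[OF B1 ut1] ut2(1)])
  have "det (mat_inv B1 * B2) \<noteq> 0"
    unfolding det_mult[OF X1 B2]
    using det_invertible_mat_nonzero[OF B1 ut1(2)] det_invertible_mat_nonzero[OF B2 ut2(2)] by simp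
  then show "(mat_inv B1 * B2) $$ (i,i) \<noteq> 0" if "i < n" for i
    by (rule upper_triangular_diag_nonzero[OF C ut_C _ that])
qed

theorem corollaryA3:
  fixes D B1 B2 :: "'a::field mat"
  assumes "D \<in> carrier_mat m m" "B1 \<in> carrier_mat m m" "B2 \<in> carrier_mat m m"
    and "differential_mat D"
    and "triangular_mat B1" "triangular_mat B2"
    and "almost_jordan (mat_inv B1 * D * B1)"
    and "almost_jordan (mat_inv B2 * D * B2)"
  shows "mat_inv B1 * D * B1 = mat_inv B2 * D * B2"
proof -
  note D = assms(1) and B1 = assms(2) and B2 = assms(3)
  have inv: "invertible_mat B1" "invertible_mat B2"
    using assms(5,6) by (simp_all add: triangular_mat_def)
  have E1: "mat_inv B1 * D * B1 \<in> carrier_mat m m" and E2: "mat_inv B2 * D * B2 \<in> carrier_mat m m"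
    and C: "mat_inv B1 * B2 \<in> carrier_mat m m"
    using invertible_mat_inv(1)[OF B1 inv(1)] invertible_mat_inv(1)[OF B2 inv(2)] D B1 B2 by auto
  show ?thesis
  proof (rule partial_perm_mat_eq_if_intertwined[OF E1 E2 C])
    show "partial_perm_mat (mat_inv B1 * D * B1)" "partial_perm_mat (mat_inv B2 * D * B2)"
      by (rule almost_jordan_partial_perm_mat[OF E1 assms(7)] almost_jordan_partial_perm_mat[OF E2 assms(8)])+
    show "upper_triangular (mat_inv B1 * B2)" "\<And>i. i < m \<Longrightarrow> (mat_inv B1 * B2) $$ (i,i) \<noteq> 0"
      using triangular_mat_inv_mult[OF B1 B2 assms(5,6)] by blast+
    show "mat_inv B1 * D * B1 * (mat_inv B1 * B2) = mat_inv B1 * B2 * (mat_inv B2 * D * B2)"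
      by (rule mat_inv_mult_intertwines_conj[OF D B1 B2 inv])
  qed
qed

end
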